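(* Let $\alpha\in[0,1]$ and set $\sigma=25\alpha+10$, $r=28-35\alpha$, $b=\frac{\alpha+8}{3}$, $\gamma=29\alpha-1$, $x_r=\sqrt{(8+\alpha)(9-2\alpha)}$, and $E_+=(x_r,x_r,x_r^2/b)=\big(\sqrt{(8+\alpha)(9-2\alpha)},\sqrt{(8+\alpha)(9-2\alpha)},27-6\alpha\big)$. Consider the controlled system $$\begin{aligned}\dot x(t)&=\sigma\,(y(t)-x(t)),\\ \dot y(t)&=r\,[x(t)-x(t-\tau)]-[x(t)z(t)-x(t-\tau)z(t-\tau)]+\gamma\,[y(t)-y(t-\tau)]-\sigma\,[y(t-\tau)-x_r],\\ \dot z(t)&=x(t)y(t)-b\,z(t),\end{aligned}$$ with delay $\tau=0$; that is, the ODE system $\dot x=\sigma(y-x)$, $\dot y=-\sigma(y-x_r)$, $\dot z=xy-bz$. Then, for every $\alpha\in[0,1]$, $E_+$ is a globally asymptotically stable equilibrium of this system.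
   Context: The system above is the generalized Lorenz system $\dot x=\sigma(y-x)$, $\dot y=rx-xz+\gamma y$, $\dot z=xy-bz$ to which the delayed feedback control $u=-rx(t-\tau)+x(t-\tau)z(t-\tau)-\gamma y(t-\tau)-\sigma[y(t-\tau)-x_r]$ has been added in the $y$-equation; $E_+$ is a nontrivial equilibrium of the uncontrolled system and an equilibrium of the controlled one. *)

theory Defs
  imports "HOL-Analysis.Analysis"
begin

definition sig :: "real \<Rightarrow> real" where "sig \<alpha> = 25 * \<alpha> + 10"
definition rr :: "real \<Rightarrow> real" where "rr \<alpha> = 28 - 35 * \<alpha>"
definition bb :: "real \<Rightarrow> real" where "bb \<alpha> = (\<alpha> + 8) / 3"
definition gam :: "real \<Rightarrow> real" where "gam \<alpha> = 29 * \<alpha> - 1"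
definition xr :: "real \<Rightarrow> real" where "xr \<alpha> = sqrt ((8 + \<alpha>) * (9 - 2 * \<alpha>))"

definition E_plus :: "real \<Rightarrow> real \<times> real \<times> real" where
  "E_plus \<alpha> = (xr \<alpha>, xr \<alpha>, (xr \<alpha>)^2 / bb \<alpha>)"

text \<open>Right-hand side of the controlled system with delay tau = 0, i.e. with
  x(t - tau) = x(t) etc. substituted into the delayed equations.\<close>
definition ctrl_field :: "real \<Rightarrow> real \<times> real \<times> real \<Rightarrow> real \<times> real \<times> real" where
  "ctrl_field \<alpha> = (\<lambda>(x, y, z).
      (sig \<alpha> * (y - x),
       rr \<alpha> * (x - x) - (x * z - x * z) + gam \<alpha> * (y - y) - sig \<alpha> * (y - xr \<alpha>),
       x * y - bb \<alpha> * z))"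

definition is_solution :: "('a::real_normed_vector \<Rightarrow> 'a) \<Rightarrow> (real \<Rightarrow> 'a) \<Rightarrow> bool" where
  "is_solution f \<phi> \<longleftrightarrow> (\<forall>t\<ge>0. (\<phi> has_vector_derivative f (\<phi> t)) (at t within {0..}))"

definition equilibrium :: "('a::real_normed_vector \<Rightarrow> 'a) \<Rightarrow> 'a \<Rightarrow> bool" where
  "equilibrium f e \<longleftrightarrow> f e = 0"

definition lyapunov_stable :: "('a::real_normed_vector \<Rightarrow> 'a) \<Rightarrow> 'a \<Rightarrow> bool" where
  "lyapunov_stable f e \<longleftrightarrow>
     (\<forall>\<epsilon>>0. \<exists>\<delta>>0. \<forall>\<phi>. is_solution f \<phi> \<and> dist (\<phi> 0) e < \<delta> \<longrightarrow> (\<forall>t\<ge>0. dist (\<phi> t) e < \<epsilon>))"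

definition globally_attractive :: "('a::real_normed_vector \<Rightarrow> 'a) \<Rightarrow> 'a \<Rightarrow> bool" where
  "globally_attractive f e \<longleftrightarrow> (\<forall>\<phi>. is_solution f \<phi> \<longrightarrow> (\<phi> \<longlongrightarrow> e) at_top)"

definition globally_asymptotically_stable :: "('a::real_normed_vector \<Rightarrow> 'a) \<Rightarrow> 'a \<Rightarrow> bool" where
  "globally_asymptotically_stable f e \<longleftrightarrow>
     equilibrium f e \<and> lyapunov_stable f e \<and> globally_attractive f e"

end

theory Submission
  imports Defs "HOL-Real_Asymp.Real_Asymp"
begin

text \<open>With zero delay the controlled system is triangular: \<open>y\<close> relaxes to \<open>x\<^sub>r\<close> at rate \<open>\<sigma>\<close>,
  \<open>x\<close> is driven towards \<open>y\<close>, and \<open>z - x\<^sub>r\<^sup>2/b\<close> obeys a linear equation of rate \<open>b\<close> forced by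
  \<open>xy - x\<^sub>r\<^sup>2\<close>. Each coordinate is controlled by the variation-of-constants estimate for
  \<open>f' = -k f + g\<close> with exponentially small \<open>g\<close>, which yields
  \<open>dist (\<phi> t) E\<^sub>+ \<le> K (dist (\<phi> 0) E\<^sub>+) e\<^sup>-\<^sup>b\<^sup>t\<close> with \<open>K\<close> continuous and \<open>K 0 = 0\<close>;
  such an estimate gives Lyapunov stability and global attractivity at once.\<close>

lemma abs_diff_le_of_abs_deriv_le:
  fixes f f' H H' :: "real \<Rightarrow> real"
  assumes f: "\<And>t. t \<ge> 0 \<Longrightarrow> (f has_real_derivative f' t) (at t within {0..})"
    and H: "\<And>t. t \<ge> 0 \<Longrightarrow> (H has_real_derivative H' t) (at t within {0..})"
    and le: "\<And>t. t \<ge> 0 \<Longrightarrow> \<bar>f' t\<bar> \<le> H' t"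
    and t: "t \<ge> 0"
  shows "\<bar>f t - f 0\<bar> \<le> H t - H 0"
proof -
  have cont: "continuous_on {0..t} g"
    if "\<And>t. t \<ge> 0 \<Longrightarrow> (g has_real_derivative g' t) (at t within {0..})" for g g'
    by (rule continuous_on_subset[OF DERIV_continuous_on[of "{0..}" g g']]) (use that in auto)
  have at: "at u within {0..} = at u" if "0 < u" for u :: real
    by (rule at_within_interior) (use that in simp)
  have "H 0 + e * f 0 \<le> H t + e * f t" if e: "\<bar>e\<bar> = 1" for e :: real
  proof (rule DERIV_nonneg_imp_increasing_open[OF t])
    fix u :: real assume u: "0 < u" "u < t"
    have "- (e * f' u) \<le> \<bar>f' u\<bar>" using abs_ge_minus_self[of "e * f' u"] e by (simp add: abs_mult)
    moreover have "((\<lambda>u. H u + e * f u) has_real_derivative H' u + e * f' u) (at u)"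
      using DERIV_add[OF H[of u] DERIV_cmult[OF f[of u]]] u at[of u] by simp
    ultimately show "\<exists>y. ((\<lambda>u. H u + e * f u) has_real_derivative y) (at u) \<and> 0 \<le> y"
      using le[of u] u by (auto intro!: exI[of _ "H' u + e * f' u"])
  qed (intro continuous_intros cont[OF f] cont[OF H])
  from this[of 1] this[of "-1"] show ?thesis by auto
qed

lemma linear_ode_integrating_factor_bound:
  fixes f g :: "real \<Rightarrow> real"
  assumes f: "\<And>t. t \<ge> 0 \<Longrightarrow> (f has_real_derivative - k * f t + g t) (at t within {0..})"
    and g: "\<And>t. t \<ge> 0 \<Longrightarrow> \<bar>g t\<bar> \<le> C * exp (- (c * t))"
    and kc: "k \<noteq> c" and t: "t \<ge> 0"
  shows "\<bar>f t * exp (k * t) - f 0\<bar> \<le> C * (exp ((k - c) * t) - 1) / (k - c)"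
proof -
  have "\<bar>f t * exp (k * t) - f 0 * exp (k * 0)\<bar>
      \<le> C * exp ((k - c) * t) / (k - c) - C * exp ((k - c) * 0) / (k - c)"
  proof (rule abs_diff_le_of_abs_deriv_le[OF _ _ _ t])
    fix u :: real assume u: "u \<ge> 0"
    show "((\<lambda>u. f u * exp (k * u)) has_real_derivative g u * exp (k * u)) (at u within {0..})"
      by (rule derivative_eq_intros f[OF u] refl | simp add: algebra_simps)+
    show "((\<lambda>u. C * exp ((k - c) * u) / (k - c)) has_real_derivative C * exp ((k - c) * u))
        (at u within {0..})"
      by (rule derivative_eq_intros refl | use kc in simp)+
    have "\<bar>g u * exp (k * u)\<bar> \<le> C * exp (- (c * u)) * exp (k * u)"
      using g[OF u] by (simp add: abs_mult)
    also have "\<dots> = C * exp ((k - c) * u)"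
      by (simp add: mult.assoc exp_add[symmetric] algebra_simps)
    finally show "\<bar>g u * exp (k * u)\<bar> \<le> C * exp ((k - c) * u)" .
  qed
  then show ?thesis by (simp add: diff_divide_distrib right_diff_distrib)
qed

lemma linear_ode_exponential_decay:
  fixes f g :: "real \<Rightarrow> real"
  assumes f: "\<And>t. t \<ge> 0 \<Longrightarrow> (f has_real_derivative - k * f t + g t) (at t within {0..})"
    and g: "\<And>t. t \<ge> 0 \<Longrightarrow> \<bar>g t\<bar> \<le> C * exp (- (c * t))"
    and kc: "k \<noteq> c" and t: "t \<ge> 0"
  shows "\<bar>f t\<bar> \<le> (\<bar>f 0\<bar> + C / \<bar>k - c\<bar>) * exp (- (min k c * t))"
proof -
  have C: "C \<ge> 0" using g[of 0] by simp
  define I where "I = C * (exp ((k - c) * t) - 1) / (k - c)"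
  have "\<bar>f t\<bar> = \<bar>f t * exp (k * t)\<bar> * exp (- (k * t))"
    by (simp add: abs_mult exp_minus)
  also have "\<dots> \<le> (\<bar>f 0\<bar> + I) * exp (- (k * t))"
    using linear_ode_integrating_factor_bound[OF f g kc t] unfolding I_def
    by (intro mult_right_mono) auto
  also have "\<dots> \<le> (\<bar>f 0\<bar> + C / \<bar>k - c\<bar>) * exp (- (min k c * t))"
  proof (cases "c < k")
    case True
    have "I * exp (- (k * t)) = C / (k - c) * (exp (- (c * t)) - exp (- (k * t)))"
      unfolding I_def using True by (simp add: field_simps exp_add[symmetric])
    also have "\<dots> \<le> C / (k - c) * exp (- (c * t))"
      using True C by (intro mult_left_mono) auto
    moreover have "\<bar>f 0\<bar> * exp (- (k * t)) \<le> \<bar>f 0\<bar> * exp (- (c * t))"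
      using True t by (intro mult_left_mono) (auto intro: mult_right_mono)
    ultimately show ?thesis
      using True by (simp add: distrib_right)
  next
    case False
    then have "I = C * (1 - exp (- ((c - k) * t))) / (c - k)"
      unfolding I_def using kc by (simp add: field_simps)
    also have "\<dots> \<le> C / \<bar>k - c\<bar>"
      using False kc C t by (simp add: divide_right_mono mult_left_le)
    finally show ?thesis
      using False by (simp add: min_def mult_right_mono)
  qed
  finally show ?thesis .
qed

lemma globally_asymptotically_stable_if_exponential_estimate:
  fixes f :: "'a::real_normed_vector \<Rightarrow> 'a" and K :: "real \<Rightarrow> real"
  assumes "equilibrium f e" and c: "c > 0" and K: "isCont K 0" "K 0 = 0"
    and estimate: "\<And>\<phi> t. is_solution f \<phi> \<Longrightarrow> t \<ge> 0 \<Longrightarrow>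
      dist (\<phi> t) e \<le> K (dist (\<phi> 0) e) * exp (- (c * t))"
  shows "globally_asymptotically_stable f e"
proof -
  have "lyapunov_stable f e"
    unfolding lyapunov_stable_def
  proof (intro allI impI)
    fix \<epsilon> :: real assume "\<epsilon> > 0"
    with K(1) have "\<exists>\<delta>>0. \<forall>r. dist r 0 < \<delta> \<longrightarrow> dist (K r) (K 0) < \<epsilon>"
      by (simp only: continuous_at_eps_delta)
    then obtain \<delta> where "\<delta> > 0" and \<delta>: "\<And>r. dist r 0 < \<delta> \<Longrightarrow> dist (K r) (K 0) < \<epsilon>"
      by blast
    have "dist (\<phi> t) e < \<epsilon>" if "is_solution f \<phi>" "dist (\<phi> 0) e < \<delta>" "t \<ge> 0" for \<phi> t
    proof -
      have "dist (\<phi> t) e \<le> \<bar>K (dist (\<phi> 0) e)\<bar> * exp (- (c * t))"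
        using estimate[OF that(1,3)] by (meson abs_ge_self exp_ge_zero mult_right_mono order_trans)
      also have "\<dots> \<le> \<bar>K (dist (\<phi> 0) e)\<bar>"
        using c that(3) by (intro mult_left_le) auto
      also have "\<dots> < \<epsilon>"
        using \<delta>[of "dist (\<phi> 0) e"] that(2) K(2) by (simp add: dist_real_def)
      finally show ?thesis .
    qed
    with \<open>\<delta> > 0\<close> show "\<exists>\<delta>>0. \<forall>\<phi>. is_solution f \<phi> \<and> dist (\<phi> 0) e < \<delta> \<longrightarrow> (\<forall>t\<ge>0. dist (\<phi> t) e < \<epsilon>)"
      by blast
  qed
  moreover have "globally_attractive f e"
    unfolding globally_attractive_def
  proof (intro allI impI)
    fix \<phi> assume sol: "is_solution f \<phi>"
    have "\<forall>\<^sub>F t in at_top. norm (dist (\<phi> t) e) \<le> K (dist (\<phi> 0) e) * exp (- (c * t))"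
      using eventually_ge_at_top[of 0] by eventually_elim (simp add: estimate[OF sol])
    moreover have "((\<lambda>t. K (dist (\<phi> 0) e) * exp (- (c * t))) \<longlongrightarrow> 0) at_top"
      using c by (intro tendsto_mult_right_zero) real_asymp
    ultimately have "((\<lambda>t. dist (\<phi> t) e) \<longlongrightarrow> 0) at_top"
      by (rule Lim_null_comparison)
    then show "(\<phi> \<longlongrightarrow> e) at_top"
      using tendsto_dist_iff by blast
  qed
  ultimately show ?thesis
    using assms(1) unfolding globally_asymptotically_stable_def by blast
qed

lemma triangular_system_exponential_estimate:
  fixes x y z :: "real \<Rightarrow> real"
  assumes dx: "\<And>t. t \<ge> 0 \<Longrightarrow> (x has_real_derivative s * (y t - x t)) (at t within {0..})"
    and dy: "\<And>t. t \<ge> 0 \<Longrightarrow> (y has_real_derivative - s * (y t - X)) (at t within {0..})"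
    and dz: "\<And>t. t \<ge> 0 \<Longrightarrow> (z has_real_derivative x t * y t - b * z t) (at t within {0..})"
    and b: "0 < b" "2 * b < s" and X: "0 \<le> X"
    and x0: "\<bar>x 0 - X\<bar> \<le> d" and y0: "\<bar>y 0 - X\<bar> \<le> d" and z0: "\<bar>z 0 - X\<^sup>2 / b\<bar> \<le> d"
    and t: "t \<ge> 0"
  shows "\<bar>x t - X\<bar> + \<bar>y t - X\<bar> + \<bar>z t - X\<^sup>2 / b\<bar>
    \<le> (5 * d + (4 * X * d + 3 * d\<^sup>2) / (s / 2 - b)) * exp (- (b * t))"
proof -
  define E where "E t = exp (- (s / 2 * t))" for t
  have d: "d \<ge> 0" using x0 by linarith
  have s: "s > 0" "min s (s / 2) = s / 2" "\<bar>s - s / 2\<bar> = s / 2" using b by auto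
  have E: "0 \<le> E t" "E t \<le> 1" if "t \<ge> 0" for t
    unfolding E_def using s that by auto
  have y_decay: "\<bar>y t - X\<bar> \<le> d * E t" if "t \<ge> 0" for t
  proof -
    have "\<bar>y t - X\<bar> \<le> (\<bar>y 0 - X\<bar> + 0 / \<bar>s - s / 2\<bar>) * exp (- (min s (s / 2) * t))"
    proof (rule linear_ode_exponential_decay[where g = "\<lambda>_. 0"])
      show "((\<lambda>t. y t - X) has_real_derivative - s * (y t - X) + 0) (at t within {0..})"
        if "t \<ge> 0" for t
        using dy[OF that] by (auto intro!: derivative_eq_intros)
    qed (use s that in auto)
    then show ?thesis
      unfolding E_def s using y0 by (auto elim!: order_trans intro!: mult_right_mono)
  qed
  \<comment> \<open>The forcing of \<open>x\<close> decays at the resonant rate \<open>s\<close>; giving up half of it avoids the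
     secular term \<open>t e\<^sup>-\<^sup>s\<^sup>t\<close>.\<close>
  have x_decay: "\<bar>x t - X\<bar> \<le> 3 * d * E t" if "t \<ge> 0" for t
  proof -
    have "\<bar>x t - X\<bar> \<le> (\<bar>x 0 - X\<bar> + s * d / \<bar>s - s / 2\<bar>) * exp (- (min s (s / 2) * t))"
    proof (rule linear_ode_exponential_decay[where g = "\<lambda>t. s * (y t - X)"])
      show "((\<lambda>t. x t - X) has_real_derivative - s * (x t - X) + s * (y t - X)) (at t within {0..})"
        if "t \<ge> 0" for t
        using dx[OF that] by (auto intro!: derivative_eq_intros simp: algebra_simps)
      show "\<bar>s * (y t - X)\<bar> \<le> s * d * exp (- (s / 2 * t))" if "t \<ge> 0" for t
        using y_decay[OF that] s unfolding E_def by (simp add: abs_mult)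
    qed (use s that in auto)
    then show ?thesis
      unfolding E_def s using x0 s by (auto elim!: order_trans intro!: mult_right_mono)
  qed
  define C where "C = 4 * X * d + 3 * d\<^sup>2"
  have z_decay: "\<bar>z t - X\<^sup>2 / b\<bar> \<le> (d + C / (s / 2 - b)) * exp (- (b * t))"
  proof -
    have "\<bar>z t - X\<^sup>2 / b\<bar> \<le> (\<bar>z 0 - X\<^sup>2 / b\<bar> + C / \<bar>b - s / 2\<bar>) * exp (- (min b (s / 2) * t))"
    proof (rule linear_ode_exponential_decay[where g = "\<lambda>t. x t * y t - X\<^sup>2"])
      show "((\<lambda>t. z t - X\<^sup>2 / b) has_real_derivative - b * (z t - X\<^sup>2 / b) + (x t * y t - X\<^sup>2))
          (at t within {0..})" if "t \<ge> 0" for t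
        using dz[OF that] b by (auto intro!: derivative_eq_intros simp: algebra_simps)
      show "\<bar>x t * y t - X\<^sup>2\<bar> \<le> C * exp (- (s / 2 * t))" if "t \<ge> 0" for t
      proof -
        have "x t * y t - X\<^sup>2 = (x t - X) * X + (y t - X) * X + (x t - X) * (y t - X)"
          by (simp add: algebra_simps power2_eq_square)
        also have "\<bar>\<dots>\<bar> \<le> 3 * d * E t * X + d * E t * X + 3 * d * E t * (d * E t)"
          using x_decay[OF that] y_decay[OF that] X d E[OF that]
          by (intro abs_triangle_ineq[THEN order_trans] add_mono) (auto simp: abs_mult intro!: mult_mono)
        also have "\<dots> \<le> C * E t"
        proof -
          have "d * d * (E t * E t) \<le> d * d * E t"
            using E[OF that] by (intro mult_left_mono) (auto simp: mult_right_le_one_le)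
          then show ?thesis unfolding C_def by (simp add: algebra_simps power2_eq_square)
        qed
        finally show ?thesis unfolding E_def .
      qed
    qed (use b t in auto)
    then show ?thesis
      using z0 b by (simp add: min_def) (auto elim!: order_trans intro!: mult_right_mono)
  qed
  have "b * t \<le> s / 2 * t"
    using b t by (intro mult_right_mono) auto
  then have "E t \<le> exp (- (b * t))"
    unfolding E_def by simp
  then have "\<bar>x t - X\<bar> + \<bar>y t - X\<bar> \<le> 4 * d * exp (- (b * t))"
    using x_decay[OF t] y_decay[OF t] mult_left_mono[of "E t" "exp (- (b * t))" "4 * d"] d
    by linarith
  with z_decay have "\<bar>x t - X\<bar> + \<bar>y t - X\<bar> + \<bar>z t - X\<^sup>2 / b\<bar>
      \<le> 4 * d * exp (- (b * t)) + (d + C / (s / 2 - b)) * exp (- (b * t))"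
    by linarith
  also have "\<dots> = (5 * d + C / (s / 2 - b)) * exp (- (b * t))"
    by (simp add: algebra_simps)
  finally show ?thesis
    unfolding C_def .
qed

lemma has_vector_derivative_fst:
  "(f has_vector_derivative D) F \<Longrightarrow> ((\<lambda>x. fst (f x)) has_vector_derivative fst D) F"
  unfolding has_vector_derivative_def by (drule has_derivative_fst) simp

lemma has_vector_derivative_snd:
  "(f has_vector_derivative D) F \<Longrightarrow> ((\<lambda>x. snd (f x)) has_vector_derivative snd D) F"
  unfolding has_vector_derivative_def by (drule has_derivative_snd) simp

definition ctrl_gain :: "real \<Rightarrow> real \<Rightarrow> real" where
  "ctrl_gain \<alpha> d = 5 * d + (4 * xr \<alpha> * d + 3 * d\<^sup>2) / (sig \<alpha> / 2 - bb \<alpha>)"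

lemma ctrl_field_solution_estimate:
  assumes \<alpha>: "0 \<le> \<alpha>" "\<alpha> \<le> 1" and sol: "is_solution (ctrl_field \<alpha>) \<phi>" and t: "t \<ge> 0"
  shows "dist (\<phi> t) (E_plus \<alpha>) \<le> ctrl_gain \<alpha> (dist (\<phi> 0) (E_plus \<alpha>)) * exp (- (bb \<alpha> * t))"
proof -
  define x y z where "x t = fst (\<phi> t)" and "y t = fst (snd (\<phi> t))" and "z t = snd (snd (\<phi> t))"
    for t
  define d where "d = dist (\<phi> 0) (E_plus \<alpha>)"
  have \<phi>: "\<phi> t = (x t, y t, z t)" for t
    unfolding x_def y_def z_def by simp
  have E: "E_plus \<alpha> = (xr \<alpha>, xr \<alpha>, (xr \<alpha>)\<^sup>2 / bb \<alpha>)"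
    unfolding E_plus_def ..
  have field: "ctrl_field \<alpha> (\<phi> t) =
      (sig \<alpha> * (y t - x t), - sig \<alpha> * (y t - xr \<alpha>), x t * y t - bb \<alpha> * z t)" for t
    unfolding \<phi> ctrl_field_def by simp
  have D: "(\<phi> has_vector_derivative ctrl_field \<alpha> (\<phi> t)) (at t within {0..})" if "t \<ge> 0" for t
    using sol that unfolding is_solution_def by blast
  note vector_deriv = has_vector_derivative_fst has_vector_derivative_snd
  note real_deriv = has_real_derivative_iff_has_vector_derivative
  have dx: "(x has_real_derivative sig \<alpha> * (y t - x t)) (at t within {0..})" if "t \<ge> 0" for t
    using vector_deriv(1)[OF D[OF that]] unfolding real_deriv field x_def[abs_def] by (simp add: y_def)
  have dy: "(y has_real_derivative - sig \<alpha> * (y t - xr \<alpha>)) (at t within {0..})" if "t \<ge> 0" for t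
    using vector_deriv(1)[OF vector_deriv(2)[OF D[OF that]]] unfolding real_deriv field y_def[abs_def]
    by simp
  have dz: "(z has_real_derivative x t * y t - bb \<alpha> * z t) (at t within {0..})" if "t \<ge> 0" for t
    using vector_deriv(2)[OF vector_deriv(2)[OF D[OF that]]] unfolding real_deriv field z_def[abs_def]
    by (simp add: x_def y_def)
  have params: "0 < bb \<alpha>" "2 * bb \<alpha> < sig \<alpha>" "0 \<le> xr \<alpha>"
    using \<alpha> unfolding bb_def sig_def xr_def by auto
  have "\<bar>x 0 - xr \<alpha>\<bar> \<le> d" "\<bar>y 0 - xr \<alpha>\<bar> \<le> d" "\<bar>z 0 - (xr \<alpha>)\<^sup>2 / bb \<alpha>\<bar> \<le> d"
    using dist_fst_le[of "\<phi> 0" "E_plus \<alpha>"] dist_snd_le[of "\<phi> 0" "E_plus \<alpha>"]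
      dist_fst_le[of "snd (\<phi> 0)" "snd (E_plus \<alpha>)"] dist_snd_le[of "snd (\<phi> 0)" "snd (E_plus \<alpha>)"]
    unfolding d_def E \<phi> by (auto simp: dist_real_def)
  note estimate = triangular_system_exponential_estimate[OF dx dy dz params this t]
  have "dist (\<phi> t) (E_plus \<alpha>) \<le> \<bar>x t - xr \<alpha>\<bar> + \<bar>y t - xr \<alpha>\<bar> + \<bar>z t - (xr \<alpha>)\<^sup>2 / bb \<alpha>\<bar>"
    using norm_Pair_le[of "x t - xr \<alpha>" "(y t - xr \<alpha>, z t - (xr \<alpha>)\<^sup>2 / bb \<alpha>)"]
      norm_Pair_le[of "y t - xr \<alpha>" "z t - (xr \<alpha>)\<^sup>2 / bb \<alpha>"]
    unfolding dist_norm E \<phi> by simp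
  with estimate show ?thesis
    unfolding ctrl_gain_def d_def by linarith
qed

theorem theorem1:
  fixes \<alpha> :: real
  assumes "0 \<le> \<alpha>" and "\<alpha> \<le> 1"
  shows "globally_asymptotically_stable (ctrl_field \<alpha>) (E_plus \<alpha>)"
proof (rule globally_asymptotically_stable_if_exponential_estimate)
  show "equilibrium (ctrl_field \<alpha>) (E_plus \<alpha>)"
    using assms unfolding equilibrium_def E_plus_def ctrl_field_def bb_def xr_def
    by (simp add: zero_prod_def)
  show "0 < bb \<alpha>"
    using assms unfolding bb_def by simp
  show "isCont (ctrl_gain \<alpha>) 0" "ctrl_gain \<alpha> 0 = 0"
    using assms unfolding ctrl_gain_def sig_def bb_def by (auto intro!: continuous_intros)
qed (use ctrl_field_solution_estimate assms in blast)

end
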